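(* Let $\Sigma$ be a shift space, $Y$ an irreducible shift of finite type, and $\phi : \Sigma \to Y$ a right closing open code. Then $\Sigma$ is a nonwandering shift of finite type.
   Context: Shift spaces are closed shift-invariant subsets of $\mathcal{A}^{\mathbb{Z}}$; a code is a continuous shift-commuting map; open: images of open sets are open. Irreducible: for all words $u,v$ there is $w$ with $uwv$ a word. Nonwandering: for every word $u$ there is $w$ with $uwu$ a word. Right closing: $\phi$ never identifies two distinct left asymptotic points, where $x,\bar x$ are left asymptotic if $d(\sigma^{-n}x,\sigma^{-n}\bar x)\to0$, $d(x,\bar x)=2^{-k}$ with $k$ maximal such that $x_{[-k,k]}=\bar x_{[-k,k]}$. *)

theory Defs
  imports Main
begin

definition shift :: "(int \<Rightarrow> 'a) \<Rightarrow> (int \<Rightarrow> 'a)" where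
  "shift x = (\<lambda>i. x (i + 1))"

text \<open>x and y agree on the central window [-k,k], i.e. d(x,y) <= 2^-k.\<close>
definition agree :: "nat \<Rightarrow> (int \<Rightarrow> 'a) \<Rightarrow> (int \<Rightarrow> 'a) \<Rightarrow> bool" where
  "agree k x y \<longleftrightarrow> (\<forall>i. - int k \<le> i \<and> i \<le> int k \<longrightarrow> x i = y i)"

definition closed_set :: "(int \<Rightarrow> 'a) set \<Rightarrow> bool" where
  "closed_set X \<longleftrightarrow> (\<forall>x. (\<forall>k. \<exists>y\<in>X. agree k x y) \<longrightarrow> x \<in> X)"

definition shift_space :: "(int \<Rightarrow> 'a::finite) set \<Rightarrow> bool" where
  "shift_space X \<longleftrightarrow> closed_set X \<and> shift ` X = X"

definition occurs_at :: "'a list \<Rightarrow> (int \<Rightarrow> 'a) \<Rightarrow> int \<Rightarrow> bool" where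
  "occurs_at w x i \<longleftrightarrow> (\<forall>j < length w. x (i + int j) = w ! j)"

definition words :: "(int \<Rightarrow> 'a) set \<Rightarrow> 'a list set" where
  "words X = {w. \<exists>x\<in>X. \<exists>i. occurs_at w x i}"

definition X_forbid :: "'a list set \<Rightarrow> (int \<Rightarrow> 'a) set" where
  "X_forbid F = {x. \<forall>w\<in>F. \<forall>i. \<not> occurs_at w x i}"

definition SFT :: "(int \<Rightarrow> 'a::finite) set \<Rightarrow> bool" where
  "SFT X \<longleftrightarrow> (\<exists>F. finite F \<and> X = X_forbid F)"

definition irreducible :: "(int \<Rightarrow> 'a) set \<Rightarrow> bool" where
  "irreducible X \<longleftrightarrow> (\<forall>u\<in>words X. \<forall>v\<in>words X. \<exists>w. u @ w @ v \<in> words X)"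

definition nonwandering :: "(int \<Rightarrow> 'a) set \<Rightarrow> bool" where
  "nonwandering X \<longleftrightarrow> (\<forall>u\<in>words X. \<exists>w. u @ w @ u \<in> words X)"

definition rel_open :: "(int \<Rightarrow> 'a) set \<Rightarrow> (int \<Rightarrow> 'a) set \<Rightarrow> bool" where
  "rel_open X U \<longleftrightarrow> U \<subseteq> X \<and> (\<forall>x\<in>U. \<exists>k. \<forall>y\<in>X. agree k x y \<longrightarrow> y \<in> U)"

definition continuous_on_shift ::
  "(int \<Rightarrow> 'a) set \<Rightarrow> ((int \<Rightarrow> 'a) \<Rightarrow> (int \<Rightarrow> 'b)) \<Rightarrow> bool" where
  "continuous_on_shift X \<phi> \<longleftrightarrow>
     (\<forall>x\<in>X. \<forall>k. \<exists>m. \<forall>y\<in>X. agree m x y \<longrightarrow> agree k (\<phi> x) (\<phi> y))"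

definition code ::
  "(int \<Rightarrow> 'a) set \<Rightarrow> (int \<Rightarrow> 'b) set \<Rightarrow> ((int \<Rightarrow> 'a) \<Rightarrow> (int \<Rightarrow> 'b)) \<Rightarrow> bool" where
  "code X Y \<phi> \<longleftrightarrow> \<phi> ` X \<subseteq> Y \<and> continuous_on_shift X \<phi> \<and>
     (\<forall>x\<in>X. \<phi> (shift x) = shift (\<phi> x))"

definition open_code ::
  "(int \<Rightarrow> 'a) set \<Rightarrow> (int \<Rightarrow> 'b) set \<Rightarrow> ((int \<Rightarrow> 'a) \<Rightarrow> (int \<Rightarrow> 'b)) \<Rightarrow> bool" where
  "open_code X Y \<phi> \<longleftrightarrow> code X Y \<phi> \<and> (\<forall>U. rel_open X U \<longrightarrow> rel_open Y (\<phi> ` U))"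

text \<open>Left asymptotic: d(shift^-n x, shift^-n y) -> 0, i.e. x and y agree on
  some left ray (-infinity, N].\<close>
definition left_asymptotic :: "(int \<Rightarrow> 'a) \<Rightarrow> (int \<Rightarrow> 'a) \<Rightarrow> bool" where
  "left_asymptotic x y \<longleftrightarrow> (\<exists>N. \<forall>i\<le>N. x i = y i)"

definition right_closing ::
  "(int \<Rightarrow> 'a) set \<Rightarrow> ((int \<Rightarrow> 'a) \<Rightarrow> (int \<Rightarrow> 'b)) \<Rightarrow> bool" where
  "right_closing X \<phi> \<longleftrightarrow>
     (\<forall>x\<in>X. \<forall>y\<in>X. left_asymptotic x y \<and> x \<noteq> y \<longrightarrow> \<phi> x \<noteq> \<phi> y)"

end

theory Submission
  imports Defs "HOL-Library.Infinite_Set"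
begin

text \<open>By compactness of the full shift, continuity, openness and right closing of \<open>\<phi>\<close> are
  uniform: \<open>\<phi>\<close> is a sliding block code of some radius, a point of \<open>Y\<close> close enough to
  \<open>\<phi> x\<close> lifts to a point close to \<open>x\<close>, and there is a delay \<open>N\<close> such that
  \<open>x\<close> on \<open>[t - N, t]\<close> together with \<open>\<phi> x\<close> on \<open>[t - N, t + N]\<close> determines \<open>x (t + 1)\<close>.

  \<open>\<Sigma>\<close> has finite memory: if \<open>x, y \<in> \<Sigma>\<close> agree on a long block ending at 0, the image of
  \<open>x\<close> glued to the image of \<open>y\<close> lies in the SFT \<open>Y\<close>; lifting it near \<open>x\<close> far to the
  left and propagating with the delay gives a point of \<open>\<Sigma>\<close> that follows \<open>x\<close> up to the block
  and \<open>y\<close> after it, so the glued point \<open>x|y\<close> is a limit of points of \<open>\<Sigma>\<close>.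

  \<open>\<Sigma>\<close> is nonwandering: if a word \<open>u\<close> occurs in \<open>x\<close>, openness puts a neighbourhood of
  \<open>\<phi> x\<close> inside the image of the cylinder of \<open>u\<close>, and irreducibility of the SFT \<open>Y\<close> puts a
  periodic point into it. Shifting a preimage containing \<open>u\<close> by multiples of the period gives
  points with the same image; by pigeonhole two of them agree on \<open>[-N, 0]\<close>, hence by the delay
  on \<open>[-N, \<infinity>)\<close>, so \<open>u\<close> occurs twice, far apart, in one point of \<open>\<Sigma>\<close>.\<close>

section \<open>Shifts, windows and forbidden words\<close>

definition shift_by :: "int \<Rightarrow> (int \<Rightarrow> 'a) \<Rightarrow> int \<Rightarrow> 'a" where
  "shift_by n x = (\<lambda>i. x (i + n))"

lemma shift_by_apply [simp]: "shift_by n x i = x (i + n)"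
  by (simp add: shift_by_def)

lemma shift_by_shift_by [simp]: "shift_by m (shift_by n x) = shift_by (m + n) x"
  by (simp add: shift_by_def ac_simps)

lemma shift_by_0 [simp]: "shift_by 0 x = x"
  by (simp add: shift_by_def)

lemma shift_eq_shift_by_1: "shift = shift_by 1"
  by (simp add: fun_eq_iff shift_def)

lemma agree_sym: "agree k x y \<longleftrightarrow> agree k y x"
  by (auto simp: agree_def)

lemma agree_trans: "agree k x y \<Longrightarrow> agree k y z \<Longrightarrow> agree k x z"
  by (auto simp: agree_def)

lemma agree_mono: "agree k x y \<Longrightarrow> k' \<le> k \<Longrightarrow> agree k' x y"
  by (auto simp: agree_def)

lemma agree_refl [simp]: "agree k x x"
  by (simp add: agree_def)

lemma agreeD: "agree k x y \<Longrightarrow> \<bar>i\<bar> \<le> int k \<Longrightarrow> x i = y i"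
  by (simp add: agree_def abs_le_iff)

lemma agree_on_interval:
  "agree k x y \<Longrightarrow> - int k \<le> a \<Longrightarrow> b \<le> int k \<Longrightarrow> \<forall>i\<in>{a..b}. x i = y i"
  by (simp add: agree_def)

lemma agree_shift_by:
  "agree k (shift_by t x) (shift_by t y) \<longleftrightarrow> (\<forall>i\<in>{t - int k..t + int k}. x i = y i)"
proof
  assume "agree k (shift_by t x) (shift_by t y)"
  show "\<forall>i\<in>{t - int k..t + int k}. x i = y i"
  proof
    fix i assume "i \<in> {t - int k..t + int k}"
    then have "shift_by t x (i - t) = shift_by t y (i - t)"
      using \<open>agree k (shift_by t x) (shift_by t y)\<close> unfolding agree_def
      by (auto dest: spec[of _ "i - t"])
    then show "x i = y i" by simp
  qed
next
  assume "\<forall>i\<in>{t - int k..t + int k}. x i = y i"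
  then show "agree k (shift_by t x) (shift_by t y)"
    unfolding agree_def by (simp add: add.commute)
qed

lemma occurs_at_shift_by: "occurs_at w (shift_by n x) i \<longleftrightarrow> occurs_at w x (i + n)"
  by (simp add: occurs_at_def ac_simps)

lemma shift_by_X_forbid: "x \<in> X_forbid F \<Longrightarrow> shift_by n x \<in> X_forbid F"
  by (simp add: X_forbid_def occurs_at_shift_by)

lemma SFT_bounded_forbidden:
  assumes "SFT Y"
  obtains F L where "Y = X_forbid F" and "\<forall>f\<in>F. length f \<le> L"
proof -
  obtain F where "finite F" "Y = X_forbid F"
    using assms by (auto simp: SFT_def)
  moreover from \<open>finite F\<close> obtain L where "\<forall>f\<in>F. length f \<le> L"
    using finite_nat_set_iff_bounded_le[of "length ` F"] by blast
  ultimately show thesis using that by blast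
qed

definition glue :: "int \<Rightarrow> (int \<Rightarrow> 'a) \<Rightarrow> (int \<Rightarrow> 'a) \<Rightarrow> int \<Rightarrow> 'a" where
  "glue c x y = (\<lambda>i. if i \<le> c then x i else y i)"

lemma glue_X_forbid:
  assumes "\<forall>f\<in>F. length f \<le> L" and "x \<in> X_forbid F" and "y \<in> X_forbid F"
    and "\<forall>i\<in>{c + 1..c + int L}. x i = y i"
  shows "glue c x y \<in> X_forbid F"
  unfolding X_forbid_def
proof (intro CollectI ballI allI notI)
  fix f i assume f: "f \<in> F" and occ: "occurs_at f (glue c x y) i"
  have "length f \<le> L" using assms(1) f by blast
  have "occurs_at f (if i \<le> c then x else y) i"
    unfolding occurs_at_def
  proof (intro allI impI)
    fix j assume j: "j < length f"
    then have "glue c x y (i + int j) = f ! j" using occ by (simp add: occurs_at_def)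
    moreover have "i + int j \<in> {c + 1..c + int L}" if "i \<le> c" "\<not> i + int j \<le> c"
      using that j \<open>length f \<le> L\<close> by simp
    ultimately show "(if i \<le> c then x else y) (i + int j) = f ! j"
      using assms(4) by (auto simp: glue_def split: if_splits)
  qed
  then show False
    using assms(2,3) f by (cases "i \<le> c") (auto simp: X_forbid_def)
qed

definition window :: "(int \<Rightarrow> 'a) \<Rightarrow> int \<Rightarrow> nat \<Rightarrow> 'a list" where
  "window x s n = map (\<lambda>j. x (s + int j)) [0..<n]"

lemma length_window [simp]: "length (window x s n) = n"
  by (simp add: window_def)

lemma nth_window [simp]: "j < n \<Longrightarrow> window x s n ! j = x (s + int j)"
  by (simp add: window_def)

lemma occurs_at_window: "occurs_at (window x s n) x s"
  by (simp add: occurs_at_def)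

lemma window_in_words: "x \<in> X \<Longrightarrow> window x s n \<in> words X"
  unfolding words_def using occurs_at_window by blast

lemma window_occurs_at: "occurs_at u x s \<Longrightarrow> window x s (length u) = u"
  by (rule nth_equalityI) (simp_all add: occurs_at_def)

lemma window_add: "window x s (n + m) = window x s n @ window x (s + int n) m"
  by (rule nth_equalityI) (auto simp: nth_append ac_simps)

definition periodic_point :: "'a list \<Rightarrow> int \<Rightarrow> 'a" where
  "periodic_point p = (\<lambda>i. p ! nat (i mod int (length p)))"

lemma periodic_point_nth: "i < length p \<Longrightarrow> periodic_point p (int i) = p ! i"
  by (simp add: periodic_point_def)

lemma shift_by_periodic_point:
  "shift_by (m * int (length p)) (periodic_point p) = periodic_point p"
  by (simp add: periodic_point_def fun_eq_iff)

lemma periodic_point_X_forbid: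
  assumes "b \<noteq> []" and "\<forall>f\<in>F. length f \<le> length b"
    and "v \<in> X_forbid F" and "occurs_at (b @ w @ b) v s"
  shows "periodic_point (b @ w) \<in> X_forbid F"
  unfolding X_forbid_def
proof (intro CollectI ballI allI notI)
  define p where "p = length (b @ w)"
  have "p > 0" using assms(1) by (simp add: p_def)
  have wrap: "(b @ w @ b) ! q = (b @ w) ! (q mod p)" if "q < p + length b" for q
  proof (cases "q < p")
    case True
    then show ?thesis using nth_append[of "b @ w" b q] by (simp add: p_def)
  next
    case False
    moreover have "q - p < p" using that by (simp add: p_def)
    ultimately have "q mod p = q - p" and "q - p < length b"
      using that by (simp_all add: le_mod_geq)
    then show ?thesis
      using False nth_append[of "b @ w" b q] nth_append[of b w "q - p"] by (simp add: p_def)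
  qed
  fix f i assume f: "f \<in> F" and occ: "occurs_at f (periodic_point (b @ w)) i"
  define Q where "Q = nat (i mod int p)"
  have "Q < p" and Q: "int Q = i mod int p"
    using \<open>p > 0\<close> by (simp_all add: Q_def nat_less_iff)
  have "occurs_at f v (s + int Q)"
    unfolding occurs_at_def
  proof (intro allI impI)
    fix j assume j: "j < length f"
    have "int ((Q + j) mod p) = (i + int j) mod int p"
      using Q by (simp add: of_nat_mod mod_add_left_eq)
    then have index: "(Q + j) mod p = nat ((i + int j) mod int p)"
      by (metis nat_int)
    have "Q + j < p + length b" using \<open>Q < p\<close> j assms(2) f by fastforce
    moreover have "length (b @ w @ b) = p + length b" by (simp add: p_def)
    ultimately have "v (s + int (Q + j)) = (b @ w) ! ((Q + j) mod p)"
      using assms(4) wrap unfolding occurs_at_def by metis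
    also have "\<dots> = f ! j"
      using occ j index by (simp add: occurs_at_def periodic_point_def p_def)
    finally show "v (s + int Q + int j) = f ! j" by (simp add: add.assoc)
  qed
  then show False using assms(3) f by (auto simp: X_forbid_def)
qed

section \<open>Compactness of the full shift\<close>

definition cluster_point :: "(nat \<Rightarrow> int \<Rightarrow> 'a) \<Rightarrow> (int \<Rightarrow> 'a) \<Rightarrow> bool" where
  "cluster_point s x \<longleftrightarrow> (\<forall>k M. \<exists>n\<ge>M. agree k (s n) x)"

lemma infinite_subset_constant:
  fixes g :: "nat \<Rightarrow> 'b::finite"
  assumes "infinite I"
  shows "\<exists>J. infinite J \<and> J \<subseteq> I \<and> (\<forall>n\<in>J. \<forall>n'\<in>J. g n = g n')"
proof -
  obtain c where "infinite (g -` {c} \<inter> I)"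
    using inf_img_fin_domE'[of g I, OF finite assms] by blast
  then show ?thesis by (intro exI[of _ "g -` {c} \<inter> I"]) auto
qed

lemma cluster_point_exists:
  fixes s :: "nat \<Rightarrow> int \<Rightarrow> 'a::finite"
  shows "\<exists>x. cluster_point s x"
proof -
  text \<open>Diagonal argument: nested infinite index sets \<open>I k\<close> on which the coordinates \<open>\<plusminus>k\<close>
    are constant.\<close>
  define stable where
    "stable J k \<longleftrightarrow> (\<forall>n\<in>J. \<forall>n'\<in>J. (s n k, s n (- k)) = (s n' k, s n' (- k)))" for J k
  define refine where "refine I k = (SOME J. infinite J \<and> J \<subseteq> I \<and> stable J k)" for I k
  have refine: "infinite (refine I k) \<and> refine I k \<subseteq> I \<and> stable (refine I k) k"
    if "infinite I" for I k
    unfolding refine_def stable_def by (rule someI_ex[OF infinite_subset_constant[OF that]])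
  define I where "I = rec_nat (refine UNIV 0) (\<lambda>k J. refine J (int (Suc k)))"
  have I: "infinite (I k) \<and> stable (I k) (int k) \<and> I (Suc k) \<subseteq> I k" for k
  proof (induction k)
    case 0
    then show ?case using refine[of UNIV 0] refine[of "I 0" 1] by (simp add: I_def)
  next
    case (Suc k)
    then show ?case using refine[of "I (Suc k)" "int (Suc (Suc k))"] refine[of "I k" "int (Suc k)"]
      by (simp add: I_def)
  qed
  have I_antimono: "k \<le> k' \<Longrightarrow> I k' \<subseteq> I k" for k k'
    using lift_Suc_antimono_le[of I] I by blast
  define x where "x i = s (SOME n. n \<in> I (nat \<bar>i\<bar>)) i" for i
  have "\<exists>n\<ge>M. agree k (s n) x" for k M
  proof -
    obtain n where n: "n \<in> I k" "n \<ge> M"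
      using I[of k] by (meson infinite_nat_iff_unbounded_le)
    have "s n i = x i" if "\<bar>i\<bar> \<le> int k" for i
    proof -
      define q where "q = nat \<bar>i\<bar>"
      define n' where "n' = (SOME n. n \<in> I q)"
      have "q \<le> k" using that by (simp add: q_def)
      then have "n \<in> I q" using I_antimono n by blast
      moreover from this have "n' \<in> I q" unfolding n'_def by (rule someI)
      ultimately have "s n (int q) = s n' (int q) \<and> s n (- int q) = s n' (- int q)"
        using I[of q] unfolding stable_def by blast
      moreover have "i = int q \<or> i = - int q" unfolding q_def by arith
      ultimately show ?thesis unfolding x_def n'_def q_def by auto
    qed
    then show ?thesis using n by (auto simp: agree_def)
  qed
  then show ?thesis unfolding cluster_point_def by blast
qed

lemma cluster_points_exist:
  fixes s s' :: "nat \<Rightarrow> int \<Rightarrow> 'a::finite"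
  shows "\<exists>x x'. \<forall>k M. \<exists>n\<ge>M. agree k (s n) x \<and> agree k (s' n) x'"
proof -
  obtain p where p: "cluster_point (\<lambda>n i. (s n i, s' n i)) p"
    using cluster_point_exists by blast
  have "agree k (s n) (fst \<circ> p) \<and> agree k (s' n) (snd \<circ> p)"
    if "agree k (\<lambda>i. (s n i, s' n i)) p" for k n
    using that unfolding agree_def by (metis comp_apply fst_conv snd_conv)
  then show ?thesis using p unfolding cluster_point_def by blast
qed

section \<open>Shift spaces\<close>

lemma shift_space_shift_by:
  assumes "shift_space S" and "x \<in> S"
  shows "shift_by n x \<in> S"
  using assms(2)
proof (induction n arbitrary: x rule: int_induct[where k = 0])
  case base
  then show ?case by simp
next
  case (step1 i)
  then have "shift_by 1 (shift_by i x) \<in> shift_by 1 ` S" by blast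
  then show ?case
    using assms(1) by (metis shift_space_def shift_eq_shift_by_1 shift_by_shift_by add.commute)
next
  case (step2 i)
  from step2.prems assms(1) obtain y where "y \<in> S" "x = shift_by 1 y"
    by (auto simp: shift_space_def shift_eq_shift_by_1)
  with step2.IH show ?case by (simp add: algebra_simps)
qed

lemma shift_space_closed:
  assumes "shift_space S" and "\<And>k. \<exists>z\<in>S. agree k x z"
  shows "x \<in> S"
  using assms by (auto simp: shift_space_def closed_set_def agree_sym)

lemma cluster_point_mem:
  assumes "shift_space S" and "\<And>n. s n \<in> S" and "cluster_point s x"
  shows "x \<in> S"
  using assms unfolding cluster_point_def by (metis shift_space_closed agree_sym)

lemma rel_open_cylinder: "rel_open S {z \<in> S. occurs_at u z 0}"
  unfolding rel_open_def
proof (intro conjI ballI)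
  fix z assume "z \<in> {z \<in> S. occurs_at u z 0}"
  then have "\<forall>y\<in>S. agree (length u) z y \<longrightarrow> y \<in> {z \<in> S. occurs_at u z 0}"
    by (auto simp: occurs_at_def agree_def)
  then show "\<exists>k. \<forall>y\<in>S. agree k z y \<longrightarrow> y \<in> {z \<in> S. occurs_at u z 0}" ..
qed auto

lemma rel_open_ball: "rel_open S {z \<in> S. agree k x z}"
  unfolding rel_open_def by (blast intro: agree_trans)

lemma window_in_words_match:
  assumes "shift_space S" and "window x a n \<in> words S"
  obtains z where "z \<in> S" and "\<forall>i\<in>{a..<a + int n}. z i = x i"
proof -
  from assms(2) obtain v j where "v \<in> S" and v: "occurs_at (window x a n) v j"
    by (auto simp: words_def)
  have "shift_by (j - a) v i = x i" if "i \<in> {a..<a + int n}" for i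
  proof -
    have "v (j + int (nat (i - a))) = x (a + int (nat (i - a)))"
      using v that unfolding occurs_at_def by (auto dest!: spec[of _ "nat (i - a)"])
    then show ?thesis using that by (simp add: algebra_simps)
  qed
  then show thesis using that shift_space_shift_by[OF assms(1) \<open>v \<in> S\<close>] by blast
qed

definition has_memory :: "(int \<Rightarrow> 'a) set \<Rightarrow> nat \<Rightarrow> bool" where
  "has_memory S K \<longleftrightarrow>
     (\<forall>x\<in>S. \<forall>y\<in>S. \<forall>c. (\<forall>i\<in>{c - int K..c}. x i = y i) \<longrightarrow> glue c x y \<in> S)"

lemma has_memory_match:
  assumes S: "shift_space S" and mem: "has_memory S K"
    and windows: "\<And>a. window x a (K + 2) \<in> words S"
  shows "\<exists>z\<in>S. \<forall>i\<in>{a..a + int K + 1 + int m}. z i = x i"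
proof -
  have base: "\<exists>z\<in>S. \<forall>i\<in>{a..a + int K + 1}. z i = x i" for a
  proof -
    obtain z where "z \<in> S" "\<forall>i\<in>{a..<a + int (K + 2)}. z i = x i"
      using window_in_words_match[OF S windows] by blast
    then show ?thesis by (intro bexI[of _ z]) auto
  qed
  show ?thesis
  proof (induction m)
    case 0
    then show ?case using base by simp
  next
    case (Suc m)
    then obtain z where z: "z \<in> S" "\<forall>i\<in>{a..a + int K + 1 + int m}. z i = x i"
      by blast
    obtain z' where z': "z' \<in> S" "\<forall>i\<in>{a + int m + 1..a + int m + int K + 2}. z' i = x i"
      using base[of "a + int m + 1"] by (auto simp: ac_simps)
    define c where "c = a + int K + 1 + int m"
    have "glue c z z' \<in> S"
      using mem z z' unfolding has_memory_def by (auto simp: c_def)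
    moreover have "\<forall>i\<in>{a..a + int K + 1 + int (Suc m)}. glue c z z' i = x i"
      using z z' by (auto simp: glue_def c_def)
    ultimately show ?case by blast
  qed
qed

lemma has_memory_imp_SFT:
  assumes S: "shift_space S" and mem: "has_memory S K"
  shows "SFT S"
proof -
  define F where "F = {u. length u = K + 2 \<and> u \<notin> words S}"
  have "finite {u :: 'a list. length u = K + 2}"
    using finite_lists_length_eq[of "UNIV :: 'a set" "K + 2"] by simp
  then have "finite F" by (rule finite_subset[rotated]) (auto simp: F_def)
  have "X_forbid F \<subseteq> S"
  proof
    fix x assume x: "x \<in> X_forbid F"
    have "window x a (K + 2) \<in> words S" for a
    proof (rule ccontr)
      assume "window x a (K + 2) \<notin> words S"
      then have "window x a (K + 2) \<in> F" by (simp add: F_def)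
      then show False using x occurs_at_window unfolding X_forbid_def by blast
    qed
    have "\<exists>z\<in>S. agree k x z" for k
    proof -
      obtain z where "z \<in> S" "\<forall>i\<in>{- int k..- int k + int K + 1 + int (2 * k)}. z i = x i"
        using has_memory_match[OF S mem \<open>\<And>a. window x a (K + 2) \<in> words S\<close>] by blast
      then show ?thesis by (intro bexI[of _ z]) (auto simp: agree_def)
    qed
    then show "x \<in> S" by (rule shift_space_closed[OF S])
  qed
  moreover have "S \<subseteq> X_forbid F"
    by (auto simp: X_forbid_def F_def words_def)
  ultimately show ?thesis using \<open>finite F\<close> by (auto simp: SFT_def)
qed

lemma irreducible_SFT_periodic_approx:
  assumes "SFT Y" and "irreducible Y" and "y0 \<in> Y"
  obtains y p where "y \<in> Y" and "agree k y0 y" and "p \<ge> m" and "shift_by (int p) y = y"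
proof -
  obtain F L where Y: "Y = X_forbid F" and L: "\<forall>f\<in>F. length f \<le> L"
    using SFT_bounded_forbidden[OF assms(1)] by blast
  define n where "n = k + L + m"
  define b where "b = window y0 (- int n) (2 * n + 1)"
  have len_b: "length b = 2 * n + 1" by (simp add: b_def)
  have "b \<in> words Y" using assms(3) by (simp add: b_def window_in_words)
  then obtain w where "b @ w @ b \<in> words Y"
    using assms(2) unfolding irreducible_def by blast
  then obtain v s where "v \<in> Y" "occurs_at (b @ w @ b) v s"
    unfolding words_def by blast
  moreover have "b \<noteq> []" and "\<forall>f\<in>F. length f \<le> length b"
    using L len_b by (auto simp: n_def)
  ultimately have "periodic_point (b @ w) \<in> Y"
    using periodic_point_X_forbid Y by blast
  define y where "y = shift_by (int n) (periodic_point (b @ w))"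
  have "y \<in> Y"
    using \<open>periodic_point (b @ w) \<in> Y\<close> shift_by_X_forbid by (simp add: y_def Y)
  moreover have "y0 i = y i" if "\<bar>i\<bar> \<le> int k" for i
  proof -
    have "nat (i + int n) < length b" and "int (nat (i + int n)) = i + int n"
      using that by (simp_all add: b_def n_def)
    then show ?thesis
      using periodic_point_nth[of "nat (i + int n)" "b @ w"]
      by (simp add: y_def nth_append b_def)
  qed
  then have "agree k y0 y" by (simp add: agree_def abs_le_iff)
  moreover have "length (b @ w) \<ge> m" using len_b by (simp add: n_def)
  moreover have "shift_by (int (length (b @ w))) y
      = shift_by (int n) (shift_by (1 * int (length (b @ w))) (periodic_point (b @ w)))"
    by (simp add: y_def add.commute)
  then have "shift_by (int (length (b @ w))) y = y"
    by (simp only: shift_by_periodic_point y_def)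
  ultimately show thesis using that by blast
qed

lemma shift_by_periodic_multiple:
  assumes "shift_by (int p) y = y"
  shows "shift_by (- (int j * int p)) y = y"
proof -
  have "y (i - int j * int p) = y i" for i
  proof (induction j)
    case 0
    then show ?case by simp
  next
    case (Suc j)
    have "y (i - int (Suc j) * int p) = y (i - int (Suc j) * int p + int p)"
      using fun_cong[OF assms, of "i - int (Suc j) * int p"] by simp
    also have "\<dots> = y (i - int j * int p)" by (simp add: algebra_simps)
    finally show ?case using Suc.IH by simp
  qed
  then show ?thesis by (simp add: fun_eq_iff)
qed

lemma agree_on_window_pigeonhole:
  fixes x :: "nat \<Rightarrow> int \<Rightarrow> 'a::finite"
  obtains j1 j2 where "j1 < j2" and "\<forall>i\<in>{c..c + int n}. x j1 i = x j2 i"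
proof -
  let ?f = "\<lambda>j. window (x j) c (n + 1)"
  have "finite (range ?f)"
    by (rule finite_subset[OF _ finite_lists_length_eq[OF finite_UNIV, of "n + 1"]]) auto
  then have "\<not> inj ?f" using finite_imageD infinite_UNIV_nat by blast
  then obtain j1 j2 where "j1 < j2" "?f j1 = ?f j2"
    unfolding inj_def by (metis linorder_neqE_nat)
  moreover have "x j1 i = x j2 i" if same: "?f j1 = ?f j2" and "i \<in> {c..c + int n}" for i
  proof -
    have "nat (i - c) < n + 1" and "c + int (nat (i - c)) = i"
      using that by auto
    then show ?thesis using nth_window[of "nat (i - c)" "n + 1"] same by metis
  qed
  ultimately show thesis using that by blast
qed

lemma words_occurs_twice:
  assumes "x \<in> X" and "occurs_at u x P" and "occurs_at u x Q" and "P + int (length u) \<le> Q"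
  shows "\<exists>w. u @ w @ u \<in> words X"
proof -
  define d where "d = nat (Q - P - int (length u))"
  have Q: "Q = P + int (length u) + int d" using assms(4) by (simp add: d_def)
  have "window x P (length u + d + length u)
      = window x P (length u) @ window x (P + int (length u)) d @ window x Q (length u)"
    by (simp add: window_add Q add.assoc)
  also have "\<dots> = u @ window x (P + int (length u)) d @ u"
    using assms(2,3) by (simp add: window_occurs_at)
  finally show ?thesis using window_in_words[OF assms(1)] by metis
qed

section \<open>Codes between shift spaces\<close>

locale shift_code =
  fixes S :: "(int \<Rightarrow> 'a::finite) set" and Y :: "(int \<Rightarrow> 'b::finite) set"
    and phi :: "(int \<Rightarrow> 'a) \<Rightarrow> int \<Rightarrow> 'b"
  assumes shift_space: "shift_space S" and code: "code S Y phi"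
begin

lemma image_mem: "x \<in> S \<Longrightarrow> phi x \<in> Y"
  using code by (auto simp: code_def)

lemma shift_by_mem: "x \<in> S \<Longrightarrow> shift_by n x \<in> S"
  by (rule shift_space_shift_by[OF shift_space])

lemma phi_shift_by:
  assumes "x \<in> S"
  shows "phi (shift_by n x) = shift_by n (phi x)"
proof (induction n rule: int_induct[where k = 0])
  case base
  then show ?case by simp
next
  case (step1 i)
  have "phi (shift_by 1 (shift_by i x)) = shift_by 1 (phi (shift_by i x))"
    using code shift_by_mem[OF assms] unfolding code_def shift_eq_shift_by_1 by blast
  with step1.IH show ?case by (metis shift_by_shift_by add.commute)
next
  case (step2 i)
  have "phi (shift_by 1 (shift_by (i - 1) x)) = shift_by 1 (phi (shift_by (i - 1) x))"
    using code shift_by_mem[OF assms] unfolding code_def shift_eq_shift_by_1 by blast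
  then have "shift_by (-1) (phi (shift_by i x)) = phi (shift_by (i - 1) x)"
    by simp
  with step2.IH show ?case by (metis shift_by_shift_by uminus_add_conv_diff)
qed

lemma uniformly_continuous_at_0: "\<exists>r. \<forall>x\<in>S. \<forall>x'\<in>S. agree r x x' \<longrightarrow> phi x 0 = phi x' 0"
proof (rule ccontr)
  assume "\<not> ?thesis"
  then have "\<forall>n. \<exists>x x'. x \<in> S \<and> x' \<in> S \<and> agree n x x' \<and> phi x 0 \<noteq> phi x' 0"
    by blast
  then obtain s s' where s: "\<And>n. s n \<in> S \<and> s' n \<in> S \<and> agree n (s n) (s' n)"
    and differ: "\<And>n. phi (s n) 0 \<noteq> phi (s' n) 0"
    unfolding choice_iff by blast
  obtain x where x: "cluster_point s x" using cluster_point_exists by blast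
  then have "x \<in> S" using cluster_point_mem[OF shift_space _ x] s by blast
  then obtain m where m: "\<forall>y\<in>S. agree m x y \<longrightarrow> agree 0 (phi x) (phi y)"
    using code unfolding code_def continuous_on_shift_def by blast
  obtain n where "n \<ge> m" and "agree m (s n) x"
    using x by (auto simp: cluster_point_def)
  then have "agree m x (s n)" and "agree m x (s' n)"
    using s[of n] by (meson agree_sym agree_trans agree_mono)+
  then have "agree 0 (phi x) (phi (s n))" "agree 0 (phi x) (phi (s' n))"
    using m s[of n] by blast+
  then show False
    using agreeD[of 0 "phi x" "phi (s n)" 0] agreeD[of 0 "phi x" "phi (s' n)" 0] differ[of n]
    by simp
qed

definition block_radius :: "nat \<Rightarrow> bool" where
  "block_radius r \<longleftrightarrow> (\<forall>x\<in>S. \<forall>x'\<in>S. \<forall>t.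
     (\<forall>i\<in>{t - int r..t + int r}. x i = x' i) \<longrightarrow> phi x t = phi x' t)"

lemma block_radius_exists: "\<exists>r. block_radius r"
proof -
  obtain r where r: "\<forall>x\<in>S. \<forall>x'\<in>S. agree r x x' \<longrightarrow> phi x 0 = phi x' 0"
    using uniformly_continuous_at_0 by blast
  have "phi x t = phi x' t"
    if "x \<in> S" "x' \<in> S" "\<forall>i\<in>{t - int r..t + int r}. x i = x' i" for x x' t
  proof -
    have "phi (shift_by t x) 0 = phi (shift_by t x') 0"
      using r that shift_by_mem by (simp add: agree_shift_by)
    then show ?thesis using that by (simp add: phi_shift_by)
  qed
  then show ?thesis unfolding block_radius_def by blast
qed

lemma joint_cluster_image_eq:
  assumes s: "\<And>n. s n \<in> S" "\<And>n. s' n \<in> S" and "x \<in> S" "x' \<in> S"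
    and c: "\<forall>k M. \<exists>n\<ge>M. agree k (s n) x \<and> agree k (s' n) x'"
    and image: "\<And>n. \<forall>i\<in>{- int n..int n}. phi (s n) i = phi (s' n) i"
  shows "phi x = phi x'"
proof
  fix i
  obtain r where r: "block_radius r"
    using block_radius_exists by blast
  define k where "k = nat \<bar>i\<bar> + r"
  obtain n where n: "n \<ge> k" "agree k (s n) x" "agree k (s' n) x'"
    using c by blast
  have bounds: "- int k \<le> i - int r" "i + int r \<le> int k"
    using abs_ge_self[of i] abs_ge_minus_self[of i] unfolding k_def by simp_all
  have "agree k x (s n)" "agree k x' (s' n)"
    using n(2,3) agree_sym by blast+
  then have "\<forall>j\<in>{i - int r..i + int r}. x j = s n j" "\<forall>j\<in>{i - int r..i + int r}. x' j = s' n j"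
    using agree_on_interval bounds by blast+
  then have "phi x i = phi (s n) i" "phi x' i = phi (s' n) i"
    using r s \<open>x \<in> S\<close> \<open>x' \<in> S\<close> unfolding block_radius_def by blast+
  moreover have "i \<in> {- int n..int n}"
    using n(1) unfolding k_def by (simp; arith)
  ultimately show "phi x i = phi x' i" using image[of n] by simp
qed

end

locale right_closing_shift_code = shift_code +
  assumes right_closing: "right_closing S phi"
begin

definition closing_delay :: "nat \<Rightarrow> bool" where
  "closing_delay N \<longleftrightarrow> (\<forall>x\<in>S. \<forall>x'\<in>S. \<forall>t.
     (\<forall>i\<in>{t - int N..t}. x i = x' i) \<and> (\<forall>i\<in>{t - int N..t + int N}. phi x i = phi x' i)
       \<longrightarrow> x (t + 1) = x' (t + 1))"

lemma closing_delay_at_0: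
  "\<exists>N. \<forall>x\<in>S. \<forall>x'\<in>S.
     (\<forall>i\<in>{- int N..0}. x i = x' i) \<and> (\<forall>i\<in>{- int N..int N}. phi x i = phi x' i) \<longrightarrow> x 1 = x' 1"
proof (rule ccontr)
  assume "\<not> ?thesis"
  then have "\<forall>n. \<exists>x x'. x \<in> S \<and> x' \<in> S \<and> (\<forall>i\<in>{- int n..0}. x i = x' i) \<and>
      (\<forall>i\<in>{- int n..int n}. phi x i = phi x' i) \<and> x 1 \<noteq> x' 1"
    by blast
  then obtain s s' where s: "\<And>n. s n \<in> S" "\<And>n. s' n \<in> S"
    and left: "\<And>n. \<forall>i\<in>{- int n..0}. s n i = s' n i"
    and image: "\<And>n. \<forall>i\<in>{- int n..int n}. phi (s n) i = phi (s' n) i"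
    and differ: "\<And>n. s n 1 \<noteq> s' n 1"
    unfolding choice_iff by blast
  obtain x x' where c: "\<forall>k M. \<exists>n\<ge>M. agree k (s n) x \<and> agree k (s' n) x'"
    using cluster_points_exist by blast
  have "cluster_point s x" "cluster_point s' x'"
    using c unfolding cluster_point_def by meson+
  then have "x \<in> S" "x' \<in> S"
    using cluster_point_mem[OF shift_space] s by blast+
  have "x i = x' i" if "i \<le> 0" for i
  proof -
    obtain n where "n \<ge> nat \<bar>i\<bar>" "agree (nat \<bar>i\<bar>) (s n) x" "agree (nat \<bar>i\<bar>) (s' n) x'"
      using c by blast
    moreover have "\<bar>i\<bar> \<le> int (nat \<bar>i\<bar>)" by simp
    ultimately have "s n i = x i" "s' n i = x' i" and "i \<in> {- int n..0}"
      using that by (meson agreeD, meson agreeD, simp)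
    then show ?thesis using left[of n] by simp
  qed
  then have "left_asymptotic x x'" by (auto simp: left_asymptotic_def)
  moreover have "x 1 \<noteq> x' 1"
  proof -
    obtain n where n: "agree 1 (s n) x" "agree 1 (s' n) x'"
      using c by blast
    have "s n 1 = x 1" "s' n 1 = x' 1"
      using agreeD[OF n(1), of 1] agreeD[OF n(2), of 1] by simp_all
    then show ?thesis using differ[of n] by simp
  qed
  moreover have "phi x = phi x'"
    using joint_cluster_image_eq[OF s \<open>x \<in> S\<close> \<open>x' \<in> S\<close> c image] .
  ultimately show False
    using right_closing \<open>x \<in> S\<close> \<open>x' \<in> S\<close> unfolding right_closing_def by fastforce
qed

lemma closing_delay_exists: "\<exists>N. closing_delay N"
proof -
  obtain N where N: "\<forall>x\<in>S. \<forall>x'\<in>S.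
     (\<forall>i\<in>{- int N..0}. x i = x' i) \<and> (\<forall>i\<in>{- int N..int N}. phi x i = phi x' i) \<longrightarrow> x 1 = x' 1"
    using closing_delay_at_0 by blast
  have "x (t + 1) = x' (t + 1)"
    if "x \<in> S" "x' \<in> S" "\<forall>i\<in>{t - int N..t}. x i = x' i"
      "\<forall>i\<in>{t - int N..t + int N}. phi x i = phi x' i" for x x' t
  proof -
    have "shift_by t x 1 = shift_by t x' 1"
      using N[rule_format, of "shift_by t x" "shift_by t x'"] that
      by (auto simp: shift_by_mem phi_shift_by)
    then show ?thesis by (simp add: add.commute)
  qed
  then show ?thesis unfolding closing_delay_def by blast
qed

lemma closing_delay_propagates:
  assumes N: "closing_delay N" and "x \<in> S" "x' \<in> S"
    and left: "\<forall>i\<in>{a - int N..a}. x i = x' i"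
    and image: "\<forall>i\<in>{a - int N..e}. phi x i = phi x' i"
  shows "\<forall>i\<in>{a - int N..e - int N + 1}. x i = x' i"
proof -
  have extend: "\<forall>i\<in>{a - int N..a + int m}. x i = x' i" if "a + int m \<le> e - int N + 1" for m
    using that
  proof (induction m)
    case 0
    then show ?case using left by simp
  next
    case (Suc m)
    then have IH: "\<forall>i\<in>{a - int N..a + int m}. x i = x' i" by simp
    have "\<forall>i\<in>{a + int m - int N..a + int m}. x i = x' i" using IH by simp
    moreover have "\<forall>i\<in>{a + int m - int N..a + int m + int N}. phi x i = phi x' i"
      using image Suc.prems by simp
    ultimately have "x (a + int m + 1) = x' (a + int m + 1)"
      using N \<open>x \<in> S\<close> \<open>x' \<in> S\<close> unfolding closing_delay_def by blast
    show ?case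
    proof
      fix i assume "i \<in> {a - int N..a + int (Suc m)}"
      then consider "i \<in> {a - int N..a + int m}" | "i = a + int m + 1" by fastforce
      then show "x i = x' i" using IH \<open>x (a + int m + 1) = x' (a + int m + 1)\<close> by cases auto
    qed
  qed
  show ?thesis
  proof
    fix i assume i: "i \<in> {a - int N..e - int N + 1}"
    show "x i = x' i"
    proof (cases "i \<le> a")
      case True
      then show ?thesis using left i by simp
    next
      case False
      then have "a + int (nat (i - a)) \<le> e - int N + 1" and "i \<in> {a - int N..a + int (nat (i - a))}"
        using i by simp_all
      then show ?thesis using extend by blast
    qed
  qed
qed

lemma closing_delay_propagates_right:
  assumes "closing_delay N" and "x \<in> S" "x' \<in> S"
    and "\<forall>i\<in>{a - int N..a}. x i = x' i"
    and "\<forall>i\<ge>a - int N. phi x i = phi x' i"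
  shows "\<forall>i\<ge>a - int N. x i = x' i"
proof (intro allI impI)
  fix i assume "a - int N \<le> i"
  have "\<forall>j\<in>{a - int N..i + int N}. phi x j = phi x' j" using assms(5) by simp
  from closing_delay_propagates[OF assms(1-4) this] \<open>a - int N \<le> i\<close> show "x i = x' i"
    by simp
qed

lemma recurrence_over_periodic_image:
  assumes "z \<in> S" and u: "occurs_at u z 0" and period: "shift_by (int p) (phi z) = phi z"
    and "length u \<le> p"
  shows "\<exists>w. u @ w @ u \<in> words S"
proof -
  obtain N where N: "closing_delay N"
    using closing_delay_exists by blast
  define a where "a j = shift_by (- (int j * int p)) z" for j
  have a: "a j \<in> S" "phi (a j) = phi z" for j
    using \<open>z \<in> S\<close> shift_by_periodic_multiple[OF period]
    by (simp_all add: a_def shift_by_mem phi_shift_by)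
  have occ: "occurs_at u (a j) (int j * int p)" for j
    using u by (simp add: a_def occurs_at_shift_by)
  obtain j1 j2 where "j1 < j2" and "\<forall>i\<in>{- int N..- int N + int N}. a j1 i = a j2 i"
    by (rule agree_on_window_pigeonhole)
  then have "\<forall>i\<in>{0 - int N..0}. a j1 i = a j2 i" by simp
  moreover have "\<forall>i\<ge>0 - int N. phi (a j1) i = phi (a j2) i" using a(2) by simp
  ultimately have agree_right: "\<forall>i\<ge>0 - int N. a j1 i = a j2 i"
    by (rule closing_delay_propagates_right[OF N a(1) a(1)])
  have "occurs_at u (a j1) (int j2 * int p)"
    unfolding occurs_at_def
  proof (intro allI impI)
    fix j assume "j < length u"
    then have "a j2 (int j2 * int p + int j) = u ! j" using occ[of j2] by (simp add: occurs_at_def)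
    moreover have "0 - int N \<le> int j2 * int p + int j" by (simp add: add_increasing)
    ultimately show "a j1 (int j2 * int p + int j) = u ! j" using agree_right by simp
  qed
  moreover have "int j1 * int p + int (length u) \<le> int j2 * int p"
  proof -
    have "int (Suc j1) * int p \<le> int j2 * int p"
      using \<open>j1 < j2\<close> by (intro mult_right_mono) simp_all
    then show ?thesis using \<open>length u \<le> p\<close> by (simp add: algebra_simps)
  qed
  ultimately show ?thesis using words_occurs_twice[OF a(1) occ] by blast
qed

end

locale open_shift_code = shift_code +
  assumes open_map: "\<And>U. rel_open S U \<Longrightarrow> rel_open Y (phi ` U)"
begin

lemma uniformly_open_at_0:
  "\<exists>l. \<forall>x\<in>S. \<forall>w\<in>Y. agree l (phi x) w \<longrightarrow> (\<exists>z\<in>S. agree k x z \<and> phi z = w)"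
proof (rule ccontr)
  assume "\<not> ?thesis"
  then have "\<forall>n. \<exists>x w. x \<in> S \<and> w \<in> Y \<and> agree n (phi x) w \<and> \<not> (\<exists>z\<in>S. agree k x z \<and> phi z = w)"
    by blast
  then obtain s v where s: "\<And>n. s n \<in> S" and v: "\<And>n. v n \<in> Y" "\<And>n. agree n (phi (s n)) (v n)"
    and unliftable: "\<And>n. \<not> (\<exists>z\<in>S. agree k (s n) z \<and> phi z = v n)"
    unfolding choice_iff by blast
  obtain x where x: "cluster_point s x" using cluster_point_exists by blast
  then have "x \<in> S" using cluster_point_mem[OF shift_space _ x] s by blast
  define U where "U = {z \<in> S. agree k x z}"
  have "rel_open Y (phi ` U)" unfolding U_def by (rule open_map[OF rel_open_ball])
  moreover have "phi x \<in> phi ` U" using \<open>x \<in> S\<close> by (simp add: U_def)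
  ultimately obtain l where l: "\<forall>w\<in>Y. agree l (phi x) w \<longrightarrow> w \<in> phi ` U"
    unfolding rel_open_def by blast
  obtain m where m: "\<forall>y\<in>S. agree m x y \<longrightarrow> agree l (phi x) (phi y)"
    using code \<open>x \<in> S\<close> unfolding code_def continuous_on_shift_def by blast
  obtain n where "n \<ge> l" and n: "agree (max m k) (s n) x"
    using x unfolding cluster_point_def by blast
  then have "agree l (phi x) (phi (s n))" "agree l (phi (s n)) (v n)"
    using m s v(2)[of n] by (meson agree_mono agree_sym max.cobounded1)+
  then have "v n \<in> phi ` U" using l v(1) agree_trans by blast
  then obtain z where "z \<in> S" "agree k x z" "phi z = v n" by (auto simp: U_def)
  moreover have "agree k (s n) x" using n agree_mono by fastforce
  ultimately show False using unliftable agree_trans by blast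
qed

text \<open>Only the shifted target is required to lie in \<open>Y\<close>, which need not be shift-invariant.\<close>
definition lift_radius :: "nat \<Rightarrow> nat \<Rightarrow> bool" where
  "lift_radius k l \<longleftrightarrow> (\<forall>x\<in>S. \<forall>w t. shift_by t w \<in> Y \<longrightarrow>
     (\<forall>i\<in>{t - int l..t + int l}. phi x i = w i) \<longrightarrow>
       (\<exists>z\<in>S. (\<forall>i\<in>{t - int k..t + int k}. x i = z i) \<and> phi z = w))"

lemma lift_radius_exists: "\<exists>l. lift_radius k l"
proof -
  obtain l where l: "\<forall>x\<in>S. \<forall>w\<in>Y. agree l (phi x) w \<longrightarrow> (\<exists>z\<in>S. agree k x z \<and> phi z = w)"
    using uniformly_open_at_0 by blast
  have "\<exists>z\<in>S. (\<forall>i\<in>{t - int k..t + int k}. x i = z i) \<and> phi z = w"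
    if x: "x \<in> S" and w: "shift_by t w \<in> Y" and eq: "\<forall>i\<in>{t - int l..t + int l}. phi x i = w i"
    for x w t
  proof -
    have "agree l (phi (shift_by t x)) (shift_by t w)"
      using x eq by (simp add: phi_shift_by agree_shift_by)
    then obtain z where z: "z \<in> S" "agree k (shift_by t x) z" "phi z = shift_by t w"
      using l shift_by_mem[OF x] w by blast
    have "agree k (shift_by t x) (shift_by t (shift_by (- t) z))" using z by simp
    then have "\<forall>i\<in>{t - int k..t + int k}. x i = shift_by (- t) z i"
      by (simp only: agree_shift_by)
    moreover have "shift_by (- t) z \<in> S" "phi (shift_by (- t) z) = w"
      using z by (simp_all add: shift_by_mem phi_shift_by)
    ultimately show ?thesis by blast
  qed
  then show ?thesis unfolding lift_radius_def by blast
qed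

end

locale right_closing_open_code = right_closing_shift_code + open_shift_code
begin

lemma glue_approximable:
  assumes Y: "Y = X_forbid F" and L: "\<forall>f\<in>F. length f \<le> L"
    and r: "block_radius r" and N: "closing_delay N" and l: "lift_radius N l"
    and x: "x \<in> S" and y: "y \<in> S" and xy: "\<forall>i\<in>{- int (L + 2 * r + 2 * N)..0}. x i = y i"
  shows "\<exists>z\<in>S. agree k (glue 0 x y) z"
proof -
  define K where "K = L + 2 * r + 2 * N"
  have image_xy: "phi x i = phi y i" if "i \<in> {- int K + int r..- int r}" for i
  proof -
    have "\<forall>j\<in>{i - int r..i + int r}. x j = y j" using xy that by (simp add: K_def)
    then show ?thesis using r x y unfolding block_radius_def by blast
  qed
  define w where "w = glue (- int r - int L) (phi x) (phi y)"
  have "w \<in> Y"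
    unfolding w_def Y using L image_mem[OF x] image_mem[OF y] image_xy
    by (intro glue_X_forbid) (auto simp: Y K_def)
  have w_left: "w i = phi x i" if "i \<le> - int r" for i
    using image_xy that by (auto simp: w_def glue_def K_def)
  have w_right: "w i = phi y i" if "i \<ge> - int K + int r" for i
    using image_xy that by (auto simp: w_def glue_def K_def)
  text \<open>Lift the glued image near \<open>x\<close> far to the left of the window \<open>[-k, k]\<close>; the closing
    delay then forces the lift to follow \<open>x\<close> and, past the gluing block, \<open>y\<close>.\<close>
  define t where "t = - int k - int l - int r - int N"
  have "shift_by t w \<in> Y" using \<open>w \<in> Y\<close> shift_by_X_forbid by (simp add: Y)
  moreover have "\<forall>i\<in>{t - int l..t + int l}. phi x i = w i" using w_left by (simp add: t_def)
  ultimately obtain z where "z \<in> S" and z_x: "\<forall>i\<in>{t - int N..t + int N}. x i = z i"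
    and "phi z = w"
    using l x unfolding lift_radius_def by blast
  have left: "z i = x i" if "i \<in> {t - int N..- int r - int N + 1}" for i
    using closing_delay_propagates[OF N \<open>z \<in> S\<close> x, of t "- int r"] z_x \<open>phi z = w\<close> w_left that
    by simp
  have right: "z i = y i" if "i \<ge> - int r - 2 * int N" for i
  proof -
    have "\<forall>i\<in>{- int r - int N - int N..- int r - int N}. z i = y i"
      using left xy by (simp add: t_def)
    moreover have "\<forall>i\<ge>- int r - int N - int N. phi z i = phi y i"
      using w_right \<open>phi z = w\<close> by (simp add: K_def)
    ultimately have "\<forall>i\<ge>- int r - int N - int N. z i = y i"
      by (rule closing_delay_propagates_right[OF N \<open>z \<in> S\<close> y])
    then show ?thesis using that by simp
  qed
  have "glue 0 x y i = z i" if "i \<in> {- int k..int k}" for i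
  proof (cases "i \<le> - int r - int N")
    case True
    then show ?thesis using left that by (simp add: glue_def t_def)
  next
    case False
    then show ?thesis using right xy by (simp add: glue_def)
  qed
  then have "agree k (glue 0 x y) z" by (simp add: agree_def)
  then show ?thesis using \<open>z \<in> S\<close> by blast
qed

lemma finite_memory:
  assumes "SFT Y"
  shows "\<exists>K. has_memory S K"
proof -
  obtain F L where Y: "Y = X_forbid F" and L: "\<forall>f\<in>F. length f \<le> L"
    using SFT_bounded_forbidden[OF assms] by blast
  obtain r N l where r: "block_radius r" and N: "closing_delay N" and l: "lift_radius N l"
    using block_radius_exists closing_delay_exists lift_radius_exists by blast
  define K where "K = L + 2 * r + 2 * N"
  have "glue c x y \<in> S"
    if "x \<in> S" "y \<in> S" "\<forall>i\<in>{c - int K..c}. x i = y i" for x y c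
  proof -
    have "\<forall>i\<in>{- int K..0}. shift_by c x i = shift_by c y i"
      using that by (simp add: algebra_simps)
    then have "glue 0 (shift_by c x) (shift_by c y) \<in> S"
      using glue_approximable[OF Y L r N l] shift_by_mem that unfolding K_def
      by (intro shift_space_closed[OF shift_space]) blast
    then have "shift_by (- c) (glue 0 (shift_by c x) (shift_by c y)) \<in> S"
      by (rule shift_by_mem)
    moreover have "shift_by (- c) (glue 0 (shift_by c x) (shift_by c y)) = glue c x y"
      by (simp add: fun_eq_iff glue_def)
    ultimately show ?thesis by simp
  qed
  then show ?thesis unfolding has_memory_def by blast
qed

lemma nonwandering:
  assumes "SFT Y" and "irreducible Y"
  shows "nonwandering S"
  unfolding nonwandering_def
proof
  fix u assume "u \<in> words S"
  then obtain x i where "x \<in> S" "occurs_at u x i"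
    unfolding words_def by blast
  then have "shift_by i x \<in> S" "occurs_at u (shift_by i x) 0"
    by (simp_all add: shift_by_mem occurs_at_shift_by)
  define U where "U = {z \<in> S. occurs_at u z 0}"
  have "rel_open Y (phi ` U)"
    unfolding U_def by (rule open_map[OF rel_open_cylinder])
  moreover have "phi (shift_by i x) \<in> phi ` U"
    using \<open>shift_by i x \<in> S\<close> \<open>occurs_at u (shift_by i x) 0\<close> by (simp add: U_def)
  ultimately obtain k where k: "\<forall>y\<in>Y. agree k (phi (shift_by i x)) y \<longrightarrow> y \<in> phi ` U"
    unfolding rel_open_def by blast
  obtain y p where "y \<in> Y" "agree k (phi (shift_by i x)) y" "p \<ge> length u"
    and period: "shift_by (int p) y = y"
    using irreducible_SFT_periodic_approx[OF assms image_mem[OF \<open>shift_by i x \<in> S\<close>]] by blast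
  then obtain z where "z \<in> U" "phi z = y"
    using k by blast
  then show "\<exists>w. u @ w @ u \<in> words S"
    using recurrence_over_periodic_image[of z u p] period \<open>p \<ge> length u\<close> by (simp add: U_def)
qed

end

theorem proposition3p4:
  fixes \<Sigma> :: "(int \<Rightarrow> 'a::finite) set"
    and Y :: "(int \<Rightarrow> 'b::finite) set"
    and \<phi> :: "(int \<Rightarrow> 'a) \<Rightarrow> (int \<Rightarrow> 'b)"
  assumes "shift_space \<Sigma>"
    and "SFT Y" and "irreducible Y"
    and "open_code \<Sigma> Y \<phi>"
    and "right_closing \<Sigma> \<phi>"
  shows "SFT \<Sigma> \<and> nonwandering \<Sigma>"
proof -
  interpret right_closing_open_code \<Sigma> Y \<phi>
    using assms by unfold_locales (auto simp: open_code_def)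
  obtain K where "has_memory \<Sigma> K"
    using finite_memory[OF \<open>SFT Y\<close>] by blast
  then show ?thesis
    using has_memory_imp_SFT[OF \<open>shift_space \<Sigma>\<close>] nonwandering[OF \<open>SFT Y\<close> \<open>irreducible Y\<close>]
    by blast
qed

end
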